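(* Let $(\mathcal{U},f,g,\preccurlyeq)$ be a fault-tolerance partially ordered $(m,n)$-semiring as described in the context, let $k,t$ be positive integers with $k<m$, $t<n$, and let $x_1,\ldots,x_m,y_1,\ldots,y_m,z_1,\ldots,z_n,u_1,\ldots,u_n\in\mathcal{U}$ be disjoint components. (i) If $f(\underbrace{\mathbf{0},\ldots,\mathbf{0}}_{m-k},\underbrace{f(x_1^m),\ldots,f(x_1^m)}_{k})\preccurlyeq f(y_1^m)$, then $f(x_1^m)\preccurlyeq f(y_1^m)$. (ii) If $g(z_1^n)\preccurlyeq g(\underbrace{\mathbf{1},\ldots,\mathbf{1}}_{n-t},\underbrace{g(u_1^n),\ldots,g(u_1^n)}_{t})$, then $g(z_1^n)\preccurlyeq g(u_1^n)$.
   Context: Notation: $x_i^j$ denotes $x_i,\ldots,x_j$. $(\mathcal{U},f,g)$ is an $(m,n)$-semiring: $f$ is an associative $m$-ary and $g$ an associative $n$-ary operation on $\mathcal{U}$ (associativity of a $k$-ary $h$: $h(x_1^{i-1},h(x_i^{k+i-1}),x_{k+i}^{2k-1})=h(x_1^{j-1},h(x_j^{k+j-1}),x_{k+j}^{2k-1})$ for $1\le i\le j\le k$), and $g$ distributes over $f$ in every position. $\mathcal{U}$ is interpreted as a set of systems; $f(x_1^m)$ is the system that fails when any $x_i$ fails, $g(y_1^n)$ the system that fails only when all $y_j$ fail; elements are assumed to be disjoint components (failing independently), which imposes no further algebraic condition. $\mathbf{0}\in\mathcal{U}$ (the always-up system) is an $f$-identity ($f(\mathbf{0},\ldots,x,\ldots,\mathbf{0})=x$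 in every position) and $\mathbf{1}$ (the always-down system) is a $g$-identity; moreover $g(y_1^{j-1},\mathbf{0},y_{j+1}^n)=\mathbf{0}$ and $f(x_1^{i-1},\mathbf{1},x_{i+1}^m)=\mathbf{1}$ for all arguments and positions. $\preccurlyeq$ is a partial order on $\mathcal{U}$ ("fault-tolerance partial order") such that $(\mathcal{U},f,g,\preccurlyeq)$ is a partially ordered $(m,n)$-semiring: $a\preccurlyeq b$ implies $f(x_1^{i-1},a,x_{i+1}^m)\preccurlyeq f(x_1^{i-1},b,x_{i+1}^m)$ and $g(y_1^{j-1},a,y_{j+1}^n)\preccurlyeq g(y_1^{j-1},b,y_{j+1}^n)$ for all arguments and all positions; and $\mathbf{0}\preccurlyeq a\preccurlyeq\mathbf{1}$ for all $a\in\mathcal{U}$. *)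

theory Defs
  imports Main
begin

text \<open>A k-ary operation on a carrier U is modelled as a function on lists, only
  meaningful on lists of length k with entries in U.\<close>

definition lists_in :: "'a set \<Rightarrow> nat \<Rightarrow> 'a list \<Rightarrow> bool" where
  "lists_in U k xs \<longleftrightarrow> length xs = k \<and> set xs \<subseteq> U"

definition nary_closed :: "'a set \<Rightarrow> nat \<Rightarrow> ('a list \<Rightarrow> 'a) \<Rightarrow> bool" where
  "nary_closed U k h \<longleftrightarrow> (\<forall>xs. lists_in U k xs \<longrightarrow> h xs \<in> U)"

text \<open>Associativity: h(x_1^{i-1}, h(x_i^{k+i-1}), x_{k+i}^{2k-1}) is independent of i
  (positions written 0-based here: i < k).\<close>
definition nary_assoc :: "'a set \<Rightarrow> nat \<Rightarrow> ('a list \<Rightarrow> 'a) \<Rightarrow> bool" where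
  "nary_assoc U k h \<longleftrightarrow>
     (\<forall>xs i j. lists_in U (2 * k - 1) xs \<longrightarrow> i \<le> j \<longrightarrow> j < k \<longrightarrow>
        h (take i xs @ [h (take k (drop i xs))] @ drop (k + i) xs) =
        h (take j xs @ [h (take k (drop j xs))] @ drop (k + j) xs))"

definition distrib_over :: "'a set \<Rightarrow> nat \<Rightarrow> nat \<Rightarrow> ('a list \<Rightarrow> 'a) \<Rightarrow> ('a list \<Rightarrow> 'a) \<Rightarrow> bool" where
  "distrib_over U m n f g \<longleftrightarrow>
     (\<forall>ys xs j. lists_in U n ys \<longrightarrow> lists_in U m xs \<longrightarrow> j < n \<longrightarrow>
        g (ys[j := f xs]) = f (map (\<lambda>x. g (ys[j := x])) xs))"

definition mn_semiring :: "'a set \<Rightarrow> nat \<Rightarrow> nat \<Rightarrow> ('a list \<Rightarrow> 'a) \<Rightarrow> ('a list \<Rightarrow> 'a) \<Rightarrow> bool" where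
  "mn_semiring U m n f g \<longleftrightarrow>
     nary_closed U m f \<and> nary_closed U n g \<and> nary_assoc U m f \<and> nary_assoc U n g \<and>
     distrib_over U m n f g"

definition ft_po_semiring ::
  "'a set \<Rightarrow> nat \<Rightarrow> nat \<Rightarrow> ('a list \<Rightarrow> 'a) \<Rightarrow> ('a list \<Rightarrow> 'a) \<Rightarrow> 'a \<Rightarrow> 'a \<Rightarrow> ('a \<Rightarrow> 'a \<Rightarrow> bool) \<Rightarrow> bool" where
  "ft_po_semiring U m n f g zero one le \<longleftrightarrow>
     mn_semiring U m n f g \<and> zero \<in> U \<and> one \<in> U \<and>
     (\<forall>x i. x \<in> U \<longrightarrow> i < m \<longrightarrow> f ((replicate m zero)[i := x]) = x) \<and>
     (\<forall>y j. y \<in> U \<longrightarrow> j < n \<longrightarrow> g ((replicate n one)[j := y]) = y) \<and>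
     (\<forall>ys j. lists_in U n ys \<longrightarrow> j < n \<longrightarrow> g (ys[j := zero]) = zero) \<and>
     (\<forall>xs i. lists_in U m xs \<longrightarrow> i < m \<longrightarrow> f (xs[i := one]) = one) \<and>
     (\<forall>a\<in>U. le a a) \<and>
     (\<forall>a\<in>U. \<forall>b\<in>U. le a b \<longrightarrow> le b a \<longrightarrow> a = b) \<and>
     (\<forall>a\<in>U. \<forall>b\<in>U. \<forall>c\<in>U. le a b \<longrightarrow> le b c \<longrightarrow> le a c) \<and>
     (\<forall>a\<in>U. \<forall>b\<in>U. \<forall>xs i. le a b \<longrightarrow> lists_in U m xs \<longrightarrow> i < m \<longrightarrow>
        le (f (xs[i := a])) (f (xs[i := b]))) \<and>
     (\<forall>a\<in>U. \<forall>b\<in>U. \<forall>ys j. le a b \<longrightarrow> lists_in U n ys \<longrightarrow> j < n \<longrightarrow>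
        le (g (ys[j := a])) (g (ys[j := b]))) \<and>
     (\<forall>a\<in>U. le zero a \<and> le a one)"

end

theory Submission
  imports Defs
begin

text \<open>Both parts rest on one observation: an operation that is monotone in each argument
  separately is monotone for the pointwise order on argument lists. Since \<open>\<zero>\<close> is the least
  element, the list \<open>(\<zero>,\<dots>,\<zero>,a)\<close> lies pointwise below \<open>(\<zero>,\<dots>,\<zero>,a,\<dots>,a)\<close>, and \<open>\<zero>\<close> is an
  \<open>f\<close>-identity, so \<open>a = f(\<zero>,\<dots>,\<zero>,a) \<preccurlyeq> f(\<zero>,\<dots>,\<zero>,a,\<dots>,a)\<close>; transitivity gives (i).
  Part (ii) is dual, with \<open>\<one>\<close> the greatest element and a \<open>g\<close>-identity.\<close>

lemma take_drop_update_Suc: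
  assumes "j < length xs" "length ys = length xs"
  shows "take (Suc j) ys @ drop (Suc j) xs = (take j ys @ drop j xs)[j := ys ! j]"
    and "take j ys @ drop j xs = (take j ys @ drop j xs)[j := xs ! j]"
  using assms
  by (simp_all add: list_update_append take_Suc_conv_app_nth Cons_nth_drop_Suc[symmetric])

lemma monotone_pointwise:
  assumes mono: "\<And>a b xs i. a \<in> U \<Longrightarrow> b \<in> U \<Longrightarrow> R a b \<Longrightarrow> lists_in U m xs \<Longrightarrow> i < m \<Longrightarrow>
                    R (h (xs[i := a])) (h (xs[i := b]))"
    and refl: "\<And>x. x \<in> U \<Longrightarrow> R x x"
    and trans: "\<And>x y z. x \<in> U \<Longrightarrow> y \<in> U \<Longrightarrow> z \<in> U \<Longrightarrow> R x y \<Longrightarrow> R y z \<Longrightarrow> R x z"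
    and closed: "\<And>xs. lists_in U m xs \<Longrightarrow> h xs \<in> U"
    and xs: "lists_in U m xs" and ys: "lists_in U m ys"
    and le: "list_all2 R xs ys"
  shows "R (h xs) (h ys)"
proof -
  let ?mix = "\<lambda>j. take j ys @ drop j xs"
  have mix_in: "lists_in U m (?mix j)" for j
    using xs ys by (auto simp: lists_in_def dest: in_set_takeD in_set_dropD)
  have "R (h xs) (h (?mix j))" if "j \<le> m" for j
    using that
  proof (induction j)
    case 0
    show ?case using refl closed xs by simp
  next
    case (Suc j)
    have j: "j < length xs" "length ys = length xs" using Suc.prems xs ys by (auto simp: lists_in_def)
    have "ys ! j \<in> U" "xs ! j \<in> U" "R (xs ! j) (ys ! j)"
      using j xs ys le by (auto simp: lists_in_def list_all2_conv_all_nth)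
    then have "R (h ((?mix j)[j := xs ! j])) (h ((?mix j)[j := ys ! j]))"
      using Suc.prems by (intro mono mix_in) auto
    then have "R (h (?mix j)) (h (?mix (Suc j)))"
      unfolding take_drop_update_Suc[OF j, symmetric] .
    with Suc show ?case using trans closed xs mix_in by (meson Suc_leD)
  qed
  from this[of m] show ?thesis using xs ys by (simp add: lists_in_def)
qed

lemma list_all2_replicate_last:
  assumes "0 < k" "k \<le> m" "R c c" "R c a" "R a a"
  shows "list_all2 R (replicate (m - 1) c @ [a]) (replicate (m - k) c @ replicate k a)"
  using assms by (auto simp: list_all2_conv_all_nth nth_append)

lemma update_last_replicate:
  assumes "0 < m"
  shows "replicate (m - 1) c @ [a] = (replicate m c)[m - 1 := a]"
  using assms by (cases m) (simp_all add: list_update_append replicate_append_same[symmetric]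
      del: replicate_append_same)

context
  fixes U m n f g zero one le
  assumes ft: "ft_po_semiring U m n f g zero one le"
begin

lemma ft_closed:
  shows "lists_in U m xs \<Longrightarrow> f xs \<in> U" and "lists_in U n ys \<Longrightarrow> g ys \<in> U"
  using ft by (simp_all add: ft_po_semiring_def mn_semiring_def nary_closed_def)

lemma ft_refl: "x \<in> U \<Longrightarrow> le x x"
  using ft unfolding ft_po_semiring_def by (elim conjE) meson

lemma ft_trans: "x \<in> U \<Longrightarrow> y \<in> U \<Longrightarrow> z \<in> U \<Longrightarrow> le x y \<Longrightarrow> le y z \<Longrightarrow> le x z"
  using ft unfolding ft_po_semiring_def by (elim conjE) meson

lemma ft_zero_least: "x \<in> U \<Longrightarrow> le zero x"
  and ft_one_greatest: "x \<in> U \<Longrightarrow> le x one"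
  and ft_zero_in: "zero \<in> U" and ft_one_in: "one \<in> U"
  using ft unfolding ft_po_semiring_def by (elim conjE; meson)+

lemma ft_f_mono: "a \<in> U \<Longrightarrow> b \<in> U \<Longrightarrow> le a b \<Longrightarrow> lists_in U m xs \<Longrightarrow> i < m \<Longrightarrow>
    le (f (xs[i := a])) (f (xs[i := b]))"
  and ft_g_mono: "a \<in> U \<Longrightarrow> b \<in> U \<Longrightarrow> le a b \<Longrightarrow> lists_in U n ys \<Longrightarrow> j < n \<Longrightarrow>
    le (g (ys[j := a])) (g (ys[j := b]))"
  using ft unfolding ft_po_semiring_def by (elim conjE; meson)+

lemma ft_f_zero_identity: "x \<in> U \<Longrightarrow> i < m \<Longrightarrow> f ((replicate m zero)[i := x]) = x"
  and ft_g_one_identity: "y \<in> U \<Longrightarrow> j < n \<Longrightarrow> g ((replicate n one)[j := y]) = y"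
  using ft unfolding ft_po_semiring_def by (elim conjE; meson)+

lemma f_monotone_pointwise:
  "lists_in U m xs \<Longrightarrow> lists_in U m ys \<Longrightarrow> list_all2 le xs ys \<Longrightarrow> le (f xs) (f ys)"
  by (rule monotone_pointwise[where h = f and R = le, OF ft_f_mono ft_refl ft_trans ft_closed(1)])

lemma g_monotone_pointwise:
  "lists_in U n xs \<Longrightarrow> lists_in U n ys \<Longrightarrow> list_all2 le xs ys \<Longrightarrow> le (g xs) (g ys)"
  by (rule monotone_pointwise[where h = g and R = le, OF ft_g_mono ft_refl ft_trans ft_closed(2)])

lemma f_zero_identity_last: "a \<in> U \<Longrightarrow> 0 < m \<Longrightarrow> f (replicate (m - 1) zero @ [a]) = a"
  by (subst update_last_replicate) (simp_all add: ft_f_zero_identity)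

lemma g_one_identity_last: "b \<in> U \<Longrightarrow> 0 < n \<Longrightarrow> g (replicate (n - 1) one @ [b]) = b"
  by (subst update_last_replicate) (simp_all add: ft_g_one_identity)

lemma f_below_f_replicate:
  assumes "a \<in> U" "0 < k" "k \<le> m"
  shows "le a (f (replicate (m - k) zero @ replicate k a))"
proof -
  have "a = f (replicate (m - 1) zero @ [a])"
    using assms f_zero_identity_last by simp
  also have "le \<dots> (f (replicate (m - k) zero @ replicate k a))"
    using assms ft_zero_in
    by (intro f_monotone_pointwise list_all2_replicate_last ft_refl ft_zero_least)
      (auto simp: lists_in_def)
  finally show ?thesis .
qed

lemma g_replicate_below_g:
  assumes "b \<in> U" "0 < t" "t \<le> n"
  shows "le (g (replicate (n - t) one @ replicate t b)) b"
proof -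
  have "list_all2 (\<lambda>x y. le y x) (replicate (n - 1) one @ [b]) (replicate (n - t) one @ replicate t b)"
    using assms ft_one_in by (intro list_all2_replicate_last ft_refl ft_one_greatest)
  then have "list_all2 le (replicate (n - t) one @ replicate t b) (replicate (n - 1) one @ [b])"
    by (simp add: list_all2_conv_all_nth)
  then have "le (g (replicate (n - t) one @ replicate t b)) (g (replicate (n - 1) one @ [b]))"
    using assms ft_one_in by (intro g_monotone_pointwise) (auto simp: lists_in_def)
  also have "g (replicate (n - 1) one @ [b]) = b"
    using assms g_one_identity_last by simp
  finally show ?thesis .
qed

end

theorem corollary4:
  fixes U :: "'a set" and m n k t :: nat
    and f g :: "'a list \<Rightarrow> 'a" and zero one :: 'a and le :: "'a \<Rightarrow> 'a \<Rightarrow> bool"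
    and xs ys zs us :: "'a list"
  assumes "ft_po_semiring U m n f g zero one le"
    and "0 < k" and "k < m" and "0 < t" and "t < n"
    and "lists_in U m xs" and "lists_in U m ys"
    and "lists_in U n zs" and "lists_in U n us"
  shows "(le (f (replicate (m - k) zero @ replicate k (f xs))) (f ys) \<longrightarrow> le (f xs) (f ys)) \<and>
         (le (g zs) (g (replicate (n - t) one @ replicate t (g us))) \<longrightarrow> le (g zs) (g us))"
proof -
  note closed = ft_closed[OF assms(1)] and trans = ft_trans[OF assms(1)]
  have fx: "f xs \<in> U" and gu: "g us \<in> U" using assms closed by auto
  have "le (f xs) (f (replicate (m - k) zero @ replicate k (f xs)))"
    using f_below_f_replicate[OF assms(1) fx] assms by simp
  moreover have "le (g (replicate (n - t) one @ replicate t (g us))) (g us)"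
    using g_replicate_below_g[OF assms(1) gu] assms by simp
  moreover have "f (replicate (m - k) zero @ replicate k (f xs)) \<in> U"
    "g (replicate (n - t) one @ replicate t (g us)) \<in> U"
    using assms fx gu ft_zero_in ft_one_in by (auto intro!: closed simp: lists_in_def)
  ultimately show ?thesis
    using trans[OF fx _ closed(1)[OF assms(7)]] trans[OF closed(2)[OF assms(8)] _ gu] by blast
qed

end
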